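(* Let $\gamma_a,\gamma_s>0$, $\sigma_B>0$, $q>0$, $\varepsilon_a>2$, and let $\beta_s$ be the piecewise linear coalbedo described in the context. Let $(T_a,T_s)$ be the maximal solution, defined on $[0,\tau^+)$, of \[ \begin{cases} \gamma_a T_a'=\varepsilon_a\sigma_B|T_s|^3T_s-2\varepsilon_a\sigma_B|T_a|^3T_a,\\ \gamma_s T_s'=-\sigma_B|T_s|^3T_s+\varepsilon_a\sigma_B|T_a|^3T_a+q\beta_s(T_s),\\ T_a(0)=T_a^{(0)}\ge0,\quad T_s(0)=T_s^{(0)}\ge0. \end{cases} \] Let \[ \mathcal E=\Big\{(T_a,T_s)\in[0,\infty)^2:\ \sigma_B T_s^4-q\beta_s(T_s)<\varepsilon_a\sigma_B T_a^4<\tfrac12\varepsilon_a\sigma_B T_s^4\Big\}, \] and let $\mu_*$ be the unique number in $(2^{1/4},\varepsilon_a^{1/4})$ satisfying $\frac{\gamma_s}{\gamma_a}\mu_*=\frac{\varepsilon_a-\mu_*^4}{\varepsilon_a(\mu_*^4-2)}$. Let $\tau_0\in[0,\tau^+)$ be any time such that $(T_a(\tau_0),T_s(\tau_0))\in\mathcal E$. Then there exists $\mu\in(2^{1/4},\mu_* )$ such that $T_s(t)\ge\mu T_a(t)$ for all $t\in[\tau_0,\tau^+)$.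
   Context: The coalbedo is $\beta_s(T)=\beta_{s,-}$ for $T\le T_{s,-}$, $\beta_s(T)=\beta_{s,-}+(\beta_{s,+}-\beta_{s,-})\frac{T-T_{s,-}}{T_{s,+}-T_{s,-}}$ for $T\in[T_{s,-},T_{s,+}]$, and $\beta_s(T)=\beta_{s,+}$ for $T\ge T_{s,+}$, where $T_{s,+}>T_{s,-}>0$ and $\beta_{s,+}>\beta_{s,-}>0$. *)

theory Defs
  imports Complex_Main "HOL-Library.Extended_Real"
begin

text \<open>Piecewise linear coalbedo with parameters Tm = T_{s,-}, Tp = T_{s,+},
  bm = beta_{s,-}, bp = beta_{s,+}.\<close>
definition coalbedo :: "real \<Rightarrow> real \<Rightarrow> real \<Rightarrow> real \<Rightarrow> real \<Rightarrow> real" where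
  "coalbedo Tm Tp bm bp T =
     (if T \<le> Tm then bm
      else if T \<le> Tp then bm + (bp - bm) * (T - Tm) / (Tp - Tm)
      else bp)"

definition is_solution ::
  "real \<Rightarrow> real \<Rightarrow> real \<Rightarrow> real \<Rightarrow> real \<Rightarrow> (real \<Rightarrow> real) \<Rightarrow>
   (real \<Rightarrow> real) \<Rightarrow> (real \<Rightarrow> real) \<Rightarrow> ereal \<Rightarrow> bool" where
  "is_solution ga gs ea sB q bs Ta Ts tau \<longleftrightarrow>
     (\<forall>t. 0 \<le> t \<and> ereal t < tau \<longrightarrow>
        (Ta has_real_derivative
           ((ea * sB * \<bar>Ts t\<bar>^3 * Ts t - 2 * ea * sB * \<bar>Ta t\<bar>^3 * Ta t) / ga))
           (at t within {s. 0 \<le> s \<and> ereal s < tau}) \<and>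
        (Ts has_real_derivative
           ((- sB * \<bar>Ts t\<bar>^3 * Ts t + ea * sB * \<bar>Ta t\<bar>^3 * Ta t + q * bs (Ts t)) / gs))
           (at t within {s. 0 \<le> s \<and> ereal s < tau}))"

definition is_maximal_solution ::
  "real \<Rightarrow> real \<Rightarrow> real \<Rightarrow> real \<Rightarrow> real \<Rightarrow> (real \<Rightarrow> real) \<Rightarrow>
   (real \<Rightarrow> real) \<Rightarrow> (real \<Rightarrow> real) \<Rightarrow> ereal \<Rightarrow> bool" where
  "is_maximal_solution ga gs ea sB q bs Ta Ts tau \<longleftrightarrow>
     0 < tau \<and> is_solution ga gs ea sB q bs Ta Ts tau \<and>
     \<not> (\<exists>tau' Ta' Ts'. tau < tau' \<and> is_solution ga gs ea sB q bs Ta' Ts' tau' \<and>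
          (\<forall>t. 0 \<le> t \<and> ereal t < tau \<longrightarrow> Ta' t = Ta t \<and> Ts' t = Ts t))"

end

theory Submission
  imports Defs "HOL-Analysis.Analysis"
begin

(* For every mu with K(mu) = (ea - mu^4)/gs - mu ea (mu^4 - 2)/ga >= 0 the cone
   {Ta >= 0, Ts >= mu Ta} is forward invariant: along the ray Ts = mu Ta one has
   (Ts - mu Ta)' = sB Ta^4 K(mu) + q beta_s(Ts)/gs > 0, and along Ta = 0 one has Ta' > 0 as long
   as Ts >= 0. K(mu) >= 0 holds for all mu <= mus, because gs/ga mu increases and
   (ea - mu^4)/(ea (mu^4 - 2)) decreases in mu, and the two agree at mus.
   At tau0 the upper inequality defining E says Ts > 2^(1/4) Ta, which leaves room for some
   mu in (2^(1/4), mus) with (Ta, Ts)(tau0) in the cone. *)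

lemma nonneg_if_deriv_pos_where_neg:
  fixes f f' :: "real \<Rightarrow> real"
  assumes "a \<le> b"
    and deriv: "\<And>t. t \<in> {a..b} \<Longrightarrow> (f has_real_derivative f' t) (at t within {a..b})"
    and pos: "\<And>t. t \<in> {a<..b} \<Longrightarrow> f t < 0 \<Longrightarrow> f' t > 0"
    and "f a \<ge> 0"
  shows "\<forall>t\<in>{a..b}. f t \<ge> 0"
proof -
  have "continuous_on {a..b} f"
    using deriv by (meson DERIV_continuous continuous_on_eq_continuous_within)
  then obtain m where m: "m \<in> {a..b}" and min: "\<forall>t\<in>{a..b}. f m \<le> f t"
    using continuous_attains_inf[of "{a..b}" f] \<open>a \<le> b\<close> by auto
  have "f m \<ge> 0"
  proof (rule ccontr)
    assume neg: "\<not> f m \<ge> 0"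
    then have "m \<in> {a<..b}"
      using m \<open>f a \<ge> 0\<close> by (cases "m = a") auto
    then have "f' m > 0"
      using pos neg by simp
    then obtain d where "d > 0" and dec: "\<forall>h>0. m - h \<in> {a..b} \<longrightarrow> h < d \<longrightarrow> f (m - h) < f m"
      using has_real_derivative_pos_inc_left[OF deriv[OF m]] by blast
    define h where "h = min (d / 2) (m - a)"
    have "h > 0" "h < d" "m - h \<in> {a..b}"
      using \<open>d > 0\<close> \<open>m \<in> {a<..b}\<close> by (auto simp: h_def)
    then show False
      using dec min by fastforce
  qed
  then show ?thesis
    using min by (meson order_trans)
qed

lemma nonneg_on_right_interval:
  fixes f :: "real \<Rightarrow> real"
  assumes "r < b"
    and deriv: "(f has_real_derivative D) (at r within {r..b})"
    and "f r \<ge> 0" and "f r = 0 \<Longrightarrow> D > 0"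
  shows "\<exists>c\<in>{r<..b}. \<forall>t\<in>{r..c}. f t \<ge> 0"
proof -
  obtain d where "d > 0" and near: "\<And>t. t \<in> {r<..b} \<Longrightarrow> t - r < d \<Longrightarrow> f t \<ge> 0"
  proof (cases "f r = 0")
    case True
    then obtain d where "d > 0" and inc: "\<forall>h>0. r + h \<in> {r..b} \<longrightarrow> h < d \<longrightarrow> f r < f (r + h)"
      using has_real_derivative_pos_inc_right[OF deriv] assms(4) by blast
    have "f t \<ge> 0" if "t \<in> {r<..b}" "t - r < d" for t
      using inc[rule_format, of "t - r"] that True by auto
    then show ?thesis
      using that \<open>d > 0\<close> by blast
  next
    case False
    then have "f r > 0"
      using \<open>f r \<ge> 0\<close> by simp
    moreover have "continuous (at r within {r..b}) f"
      using deriv by (rule DERIV_continuous)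
    ultimately obtain d where "d > 0"
      and close: "\<forall>t\<in>{r..b}. dist t r < d \<longrightarrow> dist (f t) (f r) < f r"
      unfolding continuous_within_eps_delta by blast
    have "f t \<ge> 0" if "t \<in> {r<..b}" "t - r < d" for t
      using close[rule_format, of t] that by (auto simp: dist_real_def)
    then show ?thesis
      using that \<open>d > 0\<close> by blast
  qed
  have "f t \<ge> 0" if "t \<in> {r..min b (r + d / 2)}" for t
  proof (cases "t = r")
    case False
    then show ?thesis
      using near[of t] that \<open>d > 0\<close> by auto
  qed (use \<open>f r \<ge> 0\<close> in simp)
  then show ?thesis
    using \<open>r < b\<close> \<open>d > 0\<close> by (intro bexI[of _ "min b (r + d / 2)"]) auto
qed

lemma continuous_nonneg_at_right_endpoint:
  fixes f :: "real \<Rightarrow> real"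
  assumes "a < b" "continuous_on {a..b} f" "\<forall>t\<in>{a..<b}. f t \<ge> 0"
  shows "f b \<ge> 0"
  using continuous_ge_on_closure[of "{a..<b}" f b 0] assms by auto

lemma interval_continuous_induct:
  fixes P :: "real \<Rightarrow> bool"
  assumes "a \<le> b" "P a"
    and limit: "\<And>r. a < r \<Longrightarrow> r \<le> b \<Longrightarrow> \<forall>t\<in>{a..<r}. P t \<Longrightarrow> P r"
    and step: "\<And>r. a \<le> r \<Longrightarrow> r < b \<Longrightarrow> \<forall>t\<in>{a..r}. P t \<Longrightarrow> \<exists>c\<in>{r<..b}. \<forall>t\<in>{r..c}. P t"
  shows "\<forall>t\<in>{a..b}. P t"
proof (rule ccontr)
  define A where "A = {t\<in>{a..b}. \<not> P t}"
  assume "\<not> (\<forall>t\<in>{a..b}. P t)"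
  then have "A \<noteq> {}"
    by (auto simp: A_def)
  have "bdd_below A"
    by (auto simp: A_def intro: bdd_belowI[of _ a])
  define r where "r = Inf A"
  have "a \<le> r"
    unfolding r_def using \<open>A \<noteq> {}\<close> by (intro cInf_greatest) (auto simp: A_def)
  have "r \<le> b"
    unfolding r_def using \<open>A \<noteq> {}\<close> \<open>bdd_below A\<close>
    by (metis A_def all_not_in_conv atLeastAtMost_iff cInf_lower mem_Collect_eq order_trans)
  have below: "P t" if "t \<in> {a..<r}" for t
    using cInf_lower[OF _ \<open>bdd_below A\<close>, of t] that \<open>r \<le> b\<close>
    by (force simp: A_def r_def)
  have "P r"
    using \<open>P a\<close> limit[OF _ \<open>r \<le> b\<close> ] below \<open>a \<le> r\<close> by (cases "a = r") auto
  then have upto: "\<forall>t\<in>{a..r}. P t"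
    using below by (auto simp: order_le_less)
  then have "r < b"
    using \<open>A \<noteq> {}\<close> \<open>r \<le> b\<close> by (force simp: A_def order_le_less)
  then obtain c where "c \<in> {r<..b}" and beyond: "\<forall>t\<in>{r..c}. P t"
    using step \<open>a \<le> r\<close> upto by blast
  have "c \<le> r"
    unfolding r_def
  proof (rule cInf_greatest[OF \<open>A \<noteq> {}\<close>])
    fix t
    assume "t \<in> A"
    then show "c \<le> t"
      using upto beyond by (force simp: A_def)
  qed
  then show False
    using \<open>c \<in> {r<..b}\<close> by simp
qed

lemma strict_mono_abs_power_mult_self: "strict_mono (\<lambda>x::real. \<bar>x\<bar>^n * x)"
proof (rule strict_monoI)
  fix x y :: real
  assume "x < y"
  show "\<bar>x\<bar>^n * x < \<bar>y\<bar>^n * y"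
  proof (cases "0 \<le> x")
    case True
    then show ?thesis
      using \<open>x < y\<close> power_strict_mono[of x y "Suc n"] by (simp add: mult.commute)
  next
    case False
    show ?thesis
    proof (cases "0 \<le> y")
      case True
      have "\<bar>x\<bar>^n * x < 0"
        using False by (simp add: mult_pos_neg)
      moreover have "\<bar>y\<bar>^n * y \<ge> 0"
        using True by simp
      ultimately show ?thesis
        by linarith
    next
      case False
      then have "(- y) ^ Suc n < (- x) ^ Suc n"
        using \<open>x < y\<close> by (intro power_strict_mono) auto
      moreover have "\<bar>z\<bar>^n * z = - ((- z) ^ Suc n)" if "z < 0" for z :: real
        using that by (simp add: mult.commute)
      ultimately show ?thesis
        using False \<open>\<not> 0 \<le> x\<close> by (simp add: mult.commute)
    qed
  qed
qed

lemma abs_power_mult_self_less_iff: "\<bar>x\<bar>^n * x < \<bar>y\<bar>^n * y \<longleftrightarrow> x < (y::real)"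
  using strict_mono_less[OF strict_mono_abs_power_mult_self] .

lemma abs_power_mult_self_le_iff: "\<bar>x\<bar>^n * x \<le> \<bar>y\<bar>^n * y \<longleftrightarrow> x \<le> (y::real)"
  using strict_mono_less_eq[OF strict_mono_abs_power_mult_self] .

lemma exists_between_below_ratio:
  fixes r m x y :: real
  assumes "0 \<le> x" "r * x < y" "r < m"
  shows "\<exists>mu. r < mu \<and> mu < m \<and> mu * x \<le> y"
proof -
  obtain c where "r < c" "c \<le> m" "c * x \<le> y"
  proof (cases "x = 0")
    case True
    then show ?thesis
      using that[of m] assms by simp
  next
    case False
    then have "x > 0"
      using \<open>0 \<le> x\<close> by simp
    have "min m (y / x) * x \<le> y / x * x"
      using \<open>x > 0\<close> by (intro mult_right_mono) auto
    then have "min m (y / x) * x \<le> y"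
      using \<open>x > 0\<close> by simp
    moreover have "r < y / x"
      using \<open>x > 0\<close> \<open>r * x < y\<close> by (simp add: pos_less_divide_eq)
    ultimately show ?thesis
      using that[of "min m (y / x)"] \<open>r < m\<close> by simp
  qed
  moreover obtain mu where "r < mu" "mu < c"
    using dense \<open>r < c\<close> by blast
  moreover have "mu * x \<le> c * x"
    using \<open>mu < c\<close> \<open>0 \<le> x\<close> by (simp add: mult_right_mono)
  ultimately show ?thesis
    by (intro exI[of _ mu]) auto
qed

lemma root4_two_mult_less:
  fixes x y :: real
  assumes "0 \<le> y" "2 * x^4 < y^4"
  shows "root 4 2 * x < y"
proof -
  have "(root 4 2 * x)^4 = 2 * x^4"
    by (simp add: power_mult_distrib)
  then show ?thesis
    using assms power_less_imp_less_base by metis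
qed

definition atmosphere_rate :: "real \<Rightarrow> real \<Rightarrow> real \<Rightarrow> real \<Rightarrow> real \<Rightarrow> real" where
  "atmosphere_rate ga ea sB Ta Ts = (ea * sB * \<bar>Ts\<bar>^3 * Ts - 2 * ea * sB * \<bar>Ta\<bar>^3 * Ta) / ga"

definition surface_rate :: "real \<Rightarrow> real \<Rightarrow> real \<Rightarrow> real \<Rightarrow> real \<Rightarrow> real \<Rightarrow> real \<Rightarrow> real" where
  "surface_rate gs ea sB q \<beta> Ta Ts = (- sB * \<bar>Ts\<bar>^3 * Ts + ea * sB * \<bar>Ta\<bar>^3 * Ta + q * \<beta>) / gs"

lemma is_solution_has_derivative:
  assumes "is_solution ga gs ea sB q bs Ta Ts tau" "0 \<le> a" "ereal b < tau" "t \<in> {a..b}"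
  shows "(Ta has_real_derivative atmosphere_rate ga ea sB (Ta t) (Ts t)) (at t within {a..b})"
    and "(Ts has_real_derivative surface_rate gs ea sB q (bs (Ts t)) (Ta t) (Ts t)) (at t within {a..b})"
proof -
  have sub: "{a..b} \<subseteq> {s. 0 \<le> s \<and> ereal s < tau}"
    using assms(2,3) by (auto intro: le_less_trans[of _ "ereal b"])
  then have "0 \<le> t" "ereal t < tau"
    using assms(4) by auto
  then show "(Ta has_real_derivative atmosphere_rate ga ea sB (Ta t) (Ts t)) (at t within {a..b})"
    and "(Ts has_real_derivative surface_rate gs ea sB q (bs (Ts t)) (Ta t) (Ts t)) (at t within {a..b})"
    using assms(1) sub unfolding is_solution_def atmosphere_rate_def surface_rate_def
    by (meson has_field_derivative_subset)+
qed

lemma coalbedo_pos: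
  assumes "Tm < Tp" "0 < bm" "bm < bp"
  shows "coalbedo Tm Tp bm bp T > 0"
proof -
  have "(bp - bm) * (T - Tm) / (Tp - Tm) \<ge> 0" if "Tm < T"
    using assms that by simp
  then show ?thesis
    using assms unfolding coalbedo_def by (auto intro: add_pos_nonneg)
qed

lemma atmosphere_rate_pos:
  assumes "ga > 0" "ea > 0" "sB > 0" "Ta < 0" "Ts \<ge> 0"
  shows "atmosphere_rate ga ea sB Ta Ts > 0"
proof -
  have "\<bar>Ta\<bar>^3 * Ta < 0" "\<bar>Ts\<bar>^3 * Ts \<ge> 0"
    using assms abs_power_mult_self_less_iff[of Ta 3 0] by simp_all
  then have "(2 * ea * sB) * (\<bar>Ta\<bar>^3 * Ta) < 0" "(ea * sB) * (\<bar>Ts\<bar>^3 * Ts) \<ge> 0"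
    using assms by (simp_all add: mult_pos_neg)
  then have "ea * sB * \<bar>Ts\<bar>^3 * Ts - 2 * ea * sB * \<bar>Ta\<bar>^3 * Ta > 0"
    by (simp only: mult.assoc)
  then show ?thesis
    unfolding atmosphere_rate_def using \<open>ga > 0\<close> by (rule divide_pos_pos)
qed

lemma surface_rate_pos:
  assumes "gs > 0" "ea > 0" "sB > 0" "q > 0" "\<beta> > 0" "Ta \<ge> 0" "Ts \<le> 0"
  shows "surface_rate gs ea sB q \<beta> Ta Ts > 0"
proof -
  have "\<bar>Ts\<bar>^3 * Ts \<le> 0"
    using abs_power_mult_self_le_iff[of Ts 3 0] \<open>Ts \<le> 0\<close> by simp
  then have "sB * (\<bar>Ts\<bar>^3 * Ts) \<le> 0" "(ea * sB) * (\<bar>Ta\<bar>^3 * Ta) \<ge> 0" "q * \<beta> > 0"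
    using assms by (simp_all add: mult_nonneg_nonpos)
  then have "- sB * \<bar>Ts\<bar>^3 * Ts + ea * sB * \<bar>Ta\<bar>^3 * Ta + q * \<beta> > 0"
    by (simp only: mult.assoc mult_minus_left)
  then show ?thesis
    unfolding surface_rate_def using \<open>gs > 0\<close> by (rule divide_pos_pos)
qed

lemma ratio_rate_pos:
  assumes "ga > 0" "gs > 0" "sB > 0" "ea > 0" "q > 0" "\<beta> > 0" "mu > 0"
    and "mu * ea * (mu^4 - 2) / ga \<le> (ea - mu^4) / gs"
    and "Ta \<ge> 0" "Ts < mu * Ta"
  shows "surface_rate gs ea sB q \<beta> Ta Ts - mu * atmosphere_rate ga ea sB Ta Ts > 0"
proof -
  define K where "K = (ea - mu^4) / gs - mu * ea * (mu^4 - 2) / ga"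
  define X where "X = \<bar>Ts\<bar>^3 * Ts"
  have Ta4: "\<bar>Ta\<bar>^3 * Ta = Ta^4"
    using \<open>Ta \<ge> 0\<close> by (simp add: power4_eq_xxxx power3_eq_cube)
  have "X < \<bar>mu * Ta\<bar>^3 * (mu * Ta)"
    unfolding X_def using \<open>Ts < mu * Ta\<close> abs_power_mult_self_less_iff by blast
  also have "\<dots> = mu^4 * Ta^4"
    using assms by (simp add: power4_eq_xxxx power3_eq_cube)
  finally have below: "X < mu^4 * Ta^4" .
  \<comment> \<open>On the ray Ts = mu Ta only the first two terms remain; below it the third one helps.\<close>
  have "surface_rate gs ea sB q \<beta> Ta Ts - mu * atmosphere_rate ga ea sB Ta Ts
      = sB * Ta^4 * K + q * \<beta> / gs + (mu^4 * Ta^4 - X) * (sB / gs + mu * ea * sB / ga)"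
    using \<open>ga > 0\<close> \<open>gs > 0\<close>
    unfolding surface_rate_def atmosphere_rate_def mult.assoc Ta4 X_def[symmetric] K_def
    by (simp add: field_simps)
  moreover have "sB * Ta^4 * K \<ge> 0"
    using assms by (simp add: K_def)
  moreover have "q * \<beta> / gs > 0"
    using assms by simp
  moreover have "(mu^4 * Ta^4 - X) * (sB / gs + mu * ea * sB / ga) > 0"
    using below assms by (intro mult_pos_pos add_pos_pos) auto
  ultimately show ?thesis
    by linarith
qed

lemma ratio_margin_nonneg:
  fixes ga gs ea mu mus :: real
  assumes "ga > 0" "gs > 0" "0 < mu" "mu < mus" "2 < mu^4" "mus^4 < ea"
    and mus: "gs / ga * mus = (ea - mus^4) / (ea * (mus^4 - 2))"
  shows "mu * ea * (mu^4 - 2) / ga \<le> (ea - mu^4) / gs"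
proof -
  have "mu^4 < mus^4"
    using assms by (intro power_strict_mono) auto
  then have "(ea - mus^4) / (ea * (mus^4 - 2)) \<le> (ea - mu^4) / (ea * (mu^4 - 2))"
    using assms by (intro frac_le) (auto intro: mult_left_mono)
  moreover have "gs / ga * mu \<le> gs / ga * mus"
    using assms by (intro mult_left_mono) auto
  ultimately have "gs / ga * mu \<le> (ea - mu^4) / (ea * (mu^4 - 2))"
    using mus by linarith
  then have "gs / ga * mu * (ea * (mu^4 - 2)) \<le> ea - mu^4"
    using assms \<open>mu^4 < mus^4\<close> by (subst (asm) pos_le_divide_eq) auto
  then show ?thesis
    using assms by (simp add: field_simps)
qed

lemma ratio_cone_invariant:
  fixes Ta Ts \<beta> :: "real \<Rightarrow> real"
  assumes "ga > 0" "gs > 0" "sB > 0" "ea > 0" "q > 0" "mu > 0" "\<And>t. \<beta> t > 0"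
    and "mu * ea * (mu^4 - 2) / ga \<le> (ea - mu^4) / gs"
    and "a \<le> b"
    and dTa: "\<And>t. t \<in> {a..b} \<Longrightarrow>
      (Ta has_real_derivative atmosphere_rate ga ea sB (Ta t) (Ts t)) (at t within {a..b})"
    and dTs: "\<And>t. t \<in> {a..b} \<Longrightarrow>
      (Ts has_real_derivative surface_rate gs ea sB q (\<beta> t) (Ta t) (Ts t)) (at t within {a..b})"
    and "Ta a \<ge> 0" "mu * Ta a \<le> Ts a"
  shows "\<forall>t\<in>{a..b}. Ta t \<ge> 0 \<and> mu * Ta t \<le> Ts t"
proof (rule interval_continuous_induct)
  have sub: "(Ta has_real_derivative atmosphere_rate ga ea sB (Ta t) (Ts t)) (at t within {r..c})"
    "(Ts has_real_derivative surface_rate gs ea sB q (\<beta> t) (Ta t) (Ts t)) (at t within {r..c})"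
    if "a \<le> r" "c \<le> b" "t \<in> {r..c}" for r c t
    using dTa[of t] dTs[of t] that by (auto intro: has_field_derivative_subset)
  show "Ta r \<ge> 0 \<and> mu * Ta r \<le> Ts r"
    if "a < r" "r \<le> b" and before: "\<forall>t\<in>{a..<r}. Ta t \<ge> 0 \<and> mu * Ta t \<le> Ts t" for r
  proof -
    have "continuous_on {a..r} Ta" "continuous_on {a..r} Ts"
      using sub[OF order_refl \<open>r \<le> b\<close>]
      by (meson DERIV_continuous continuous_on_eq_continuous_within)+
    then have "continuous_on {a..r} (\<lambda>t. Ts t - mu * Ta t)"
      by (intro continuous_intros)
    then show ?thesis
      using continuous_nonneg_at_right_endpoint[OF \<open>a < r\<close>, of Ta]
        continuous_nonneg_at_right_endpoint[OF \<open>a < r\<close>, of "\<lambda>t. Ts t - mu * Ta t"]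
        \<open>continuous_on {a..r} Ta\<close> before by auto
  qed
  show "\<exists>c\<in>{r<..b}. \<forall>t\<in>{r..c}. Ta t \<ge> 0 \<and> mu * Ta t \<le> Ts t"
    if "a \<le> r" "r < b" and upto: "\<forall>t\<in>{a..r}. Ta t \<ge> 0 \<and> mu * Ta t \<le> Ts t" for r
  proof -
    have "Ta r \<ge> 0" "mu * Ta r \<le> Ts r"
      using upto \<open>a \<le> r\<close> by auto
    then have "Ts r \<ge> 0"
      using \<open>mu > 0\<close> by (meson mult_nonneg_nonneg less_imp_le order_trans)
    \<comment> \<open>The rate of Ts is positive where Ts = 0, so Ts stays nonnegative a little beyond r;
      this breaks the circularity between the two barriers Ta = 0 and Ts = mu Ta.\<close>
    then obtain c where "c \<in> {r<..b}" and Ts_nonneg: "\<forall>t\<in>{r..c}. Ts t \<ge> 0"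
      using nonneg_on_right_interval[OF \<open>r < b\<close> sub(2)[OF \<open>a \<le> r\<close> order_refl]]
        surface_rate_pos assms \<open>Ta r \<ge> 0\<close> \<open>r < b\<close> by auto
    then have dc: "(Ta has_real_derivative atmosphere_rate ga ea sB (Ta t) (Ts t)) (at t within {r..c})"
      "(Ts has_real_derivative surface_rate gs ea sB q (\<beta> t) (Ta t) (Ts t)) (at t within {r..c})"
      if "t \<in> {r..c}" for t
      using sub[OF \<open>a \<le> r\<close> _ that] by auto
    have Ta_nonneg: "\<forall>t\<in>{r..c}. Ta t \<ge> 0"
    proof (rule nonneg_if_deriv_pos_where_neg)
      show "atmosphere_rate ga ea sB (Ta t) (Ts t) > 0" if "t \<in> {r<..c}" "Ta t < 0" for t
        using that Ts_nonneg assms by (intro atmosphere_rate_pos) auto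
    qed (use \<open>c \<in> {r<..b}\<close> \<open>Ta r \<ge> 0\<close> dc in auto)
    have "\<forall>t\<in>{r..c}. Ts t - mu * Ta t \<ge> 0"
    proof (rule nonneg_if_deriv_pos_where_neg)
      show "((\<lambda>t. Ts t - mu * Ta t) has_real_derivative
          surface_rate gs ea sB q (\<beta> t) (Ta t) (Ts t) - mu * atmosphere_rate ga ea sB (Ta t) (Ts t))
          (at t within {r..c})" if "t \<in> {r..c}" for t
        using dc[OF that] by (intro DERIV_diff DERIV_cmult)
      show "surface_rate gs ea sB q (\<beta> t) (Ta t) (Ts t) - mu * atmosphere_rate ga ea sB (Ta t) (Ts t) > 0"
        if "t \<in> {r<..c}" "Ts t - mu * Ta t < 0" for t
        using that Ta_nonneg assms by (intro ratio_rate_pos) auto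
    qed (use \<open>c \<in> {r<..b}\<close> \<open>mu * Ta r \<le> Ts r\<close> in auto)
    then show ?thesis
      using \<open>c \<in> {r<..b}\<close> Ta_nonneg by auto
  qed
qed (use \<open>a \<le> b\<close> \<open>Ta a \<ge> 0\<close> \<open>mu * Ta a \<le> Ts a\<close> in auto)

theorem lemmaA1:
  fixes ga gs sB q ea Tm Tp bm bp mus tau0 :: real
    and tau :: ereal
    and Ta Ts :: "real \<Rightarrow> real"
  assumes "ga > 0" and "gs > 0" and "sB > 0" and "q > 0" and "ea > 2"
    and "0 < Tm" and "Tm < Tp" and "0 < bm" and "bm < bp"
    and sol: "is_maximal_solution ga gs ea sB q (coalbedo Tm Tp bm bp) Ta Ts tau"
    and "Ta 0 \<ge> 0" and "Ts 0 \<ge> 0"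
    and mus: "root 4 2 < mus" "mus < root 4 ea"
      "gs / ga * mus = (ea - mus^4) / (ea * (mus^4 - 2))"
    and "0 \<le> tau0" and "ereal tau0 < tau"
    and E: "Ta tau0 \<ge> 0" "Ts tau0 \<ge> 0"
      "sB * Ts tau0 ^ 4 - q * coalbedo Tm Tp bm bp (Ts tau0) < ea * sB * Ta tau0 ^ 4"
      "ea * sB * Ta tau0 ^ 4 < 1/2 * ea * sB * Ts tau0 ^ 4"
  shows "\<exists>mu. root 4 2 < mu \<and> mu < mus \<and>
           (\<forall>t. tau0 \<le> t \<and> ereal t < tau \<longrightarrow> Ts t \<ge> mu * Ta t)"
proof -
  have "2 * Ta tau0 ^ 4 < Ts tau0 ^ 4"
    using E(4) assms by simp
  then obtain mu where mu: "root 4 2 < mu" "mu < mus" "mu * Ta tau0 \<le> Ts tau0"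
    using exists_between_below_ratio root4_two_mult_less E(1,2) mus(1) by meson
  have "0 < mu"
    using mu(1) real_root_gt_zero[of 4 2] by linarith
  have "2 < mu^4"
    using power_strict_mono[OF mu(1), of 4] by simp
  have "mus^4 < root 4 ea ^ 4"
    using \<open>0 < mu\<close> mu(2) by (intro power_strict_mono[OF mus(2)]) auto
  then have "mus^4 < ea"
    using \<open>ea > 2\<close> by simp
  have margin: "mu * ea * (mu^4 - 2) / ga \<le> (ea - mu^4) / gs"
    by (rule ratio_margin_nonneg[OF \<open>ga > 0\<close> \<open>gs > 0\<close> \<open>0 < mu\<close> mu(2) \<open>2 < mu^4\<close> \<open>mus^4 < ea\<close> mus(3)])
  have "is_solution ga gs ea sB q (coalbedo Tm Tp bm bp) Ta Ts tau"
    using sol unfolding is_maximal_solution_def by blast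
  note derivs = is_solution_has_derivative[OF this \<open>0 \<le> tau0\<close>]
  have "\<forall>s\<in>{tau0..t}. Ta s \<ge> 0 \<and> mu * Ta s \<le> Ts s" if "tau0 \<le> t" "ereal t < tau" for t
  proof (rule ratio_cone_invariant[where ga = ga and gs = gs and sB = sB and ea = ea and q = q
        and \<beta> = "\<lambda>s. coalbedo Tm Tp bm bp (Ts s)"])
    show "ea > 0"
      using \<open>ea > 2\<close> by simp
  qed (fact derivs[OF that(2)] assms \<open>0 < mu\<close> margin mu(3) that(1)
      coalbedo_pos[OF \<open>Tm < Tp\<close> \<open>0 < bm\<close> \<open>bm < bp\<close>])+
  then have "mu * Ta t \<le> Ts t" if "tau0 \<le> t" "ereal t < tau" for t
    using that by auto
  then show ?thesis
    using mu by blast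
qed

end
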